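(* Let $\mathbb{T}$ be a time scale, let $f:\mathbb{T}\to\mathbb{R}$, let $t\in\mathbb{T}^{\kappa}$ and let $\alpha\in(0,1]$. Then: (i) If $f$ is continuous at $t$ and $t$ is right-scattered, then $f$ is delta differentiable of order $\alpha$ at $t$ and $$f^{\Delta^{\alpha}}(t)=\frac{f^{\alpha}(\sigma(t))-f^{\alpha}(t)}{\sigma^{\alpha}(t)-t^{\alpha}}.$$ (ii) If $t$ is right-dense, then $f$ is delta differentiable of order $\alpha$ at $t$ if and only if the limit $\lim_{s\to t,\, s\in\mathbb{T}}\frac{f^{\alpha}(t)-f^{\alpha}(s)}{t^{\alpha}-s^{\alpha}}$ exists as a finite number, and in this case $$f^{\Delta^{\alpha}}(t)=\lim_{s\to t}\frac{f^{\alpha}(t)-f^{\alpha}(s)}{t^{\alpha}-s^{\alpha}}.$$ (iii) If $f$ is delta differentiable of order $\alpha$ at $t$, then $$f^{\alpha}(\sigma(t))=f^{\alpha}(t)+\bigl(\sigma(t)^{\alpha}-t^{\alpha}\bigr)f^{\Delta^{\alpha}}(t).$$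
   Context: A time scale $\mathbb{T}$ is a nonempty closed subset of $\mathbb{R}$. The forward jump operator is $\sigma(t)=\inf\{s\in\mathbb{T}:s>t\}$ and the backward jump operator is $\rho(t)=\sup\{s\in\mathbb{T}:s<t\}$. A point $t$ is right-scattered if $\sigma(t)>t$, and right-dense if $t<\sup\mathbb{T}$ and $\sigma(t)=t$. If $\mathbb{T}$ has a left-scattered maximum $m$ (i.e. $\rho(m)<m$), then $\mathbb{T}^{\kappa}=\mathbb{T}\setminus\{m\}$; otherwise $\mathbb{T}^{\kappa}=\mathbb{T}$. For a real-valued $f$, $f^{\alpha}$ denotes the pointwise power $(f(\cdot))^{\alpha}$, $\sigma^{\alpha}(t)=\sigma(t)^{\alpha}$, and powers of real numbers (possibly negative) are taken as complex numbers, so these quantities may be complex. Definition: for $\alpha\in(0,1]$ and $t\in\mathbb{T}^{\kappa}$, $f$ is delta differentiable of order $\alpha$ at $t$ with delta derivative of order $\alpha$ equal to the (complex) number $f^{\Delta^{\alpha}}(t)$ if for every $\epsilon>0$ there is $\delta>0$ such that, with $U=(t-\delta,t+\delta)\cap\mathbb{T}$, $$\bigl|[f^{\alpha}(\sigma(t))-f^{\alpha}(s)]-f^{\Delta^{\alpha}}(t)[\sigma(t)^{\alpha}-s^{\alpha}]\bigr|\le\epsilon\,|\sigma(t)^{\alpha}-s^{\alpha}|\quad\text{for all } s\in U.$$ *)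

theory Defs
  imports "HOL-Analysis.Analysis"
begin

definition time_scale :: "real set \<Rightarrow> bool" where
  "time_scale T \<longleftrightarrow> T \<noteq> {} \<and> closed T"

text \<open>Forward jump; convention inf of the empty set = sup T, i.e. sigma(max T) = max T.\<close>
definition sigma :: "real set \<Rightarrow> real \<Rightarrow> real" where
  "sigma T t = (if \<exists>s\<in>T. s > t then Inf {s\<in>T. s > t} else t)"

text \<open>Backward jump; convention sup of the empty set = inf T, i.e. rho(min T) = min T.\<close>
definition rho :: "real set \<Rightarrow> real \<Rightarrow> real" where
  "rho T t = (if \<exists>s\<in>T. s < t then Sup {s\<in>T. s < t} else t)"

definition right_scattered :: "real set \<Rightarrow> real \<Rightarrow> bool" where
  "right_scattered T t \<longleftrightarrow> sigma T t > t"

definition right_dense :: "real set \<Rightarrow> real \<Rightarrow> bool" where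
  "right_dense T t \<longleftrightarrow> (\<exists>s\<in>T. t < s) \<and> sigma T t = t"

definition kappa :: "real set \<Rightarrow> real set" where
  "kappa T = (if \<exists>m\<in>T. (\<forall>s\<in>T. s \<le> m) \<and> rho T m < m
              then T - {m. m \<in> T \<and> (\<forall>s\<in>T. s \<le> m)} else T)"

text \<open>Real number raised to a real power, computed as a complex number (principal branch).\<close>
definition cpow :: "real \<Rightarrow> real \<Rightarrow> complex" where
  "cpow x a = (complex_of_real x) powr (complex_of_real a)"

definition has_delta_deriv_alpha ::
    "real set \<Rightarrow> real \<Rightarrow> (real \<Rightarrow> real) \<Rightarrow> complex \<Rightarrow> real \<Rightarrow> bool" where
  "has_delta_deriv_alpha T \<alpha> f D t \<longleftrightarrow>
     (\<forall>\<epsilon>>0. \<exists>\<delta>>0. \<forall>s\<in>T. \<bar>s - t\<bar> < \<delta> \<longrightarrow>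
        cmod ((cpow (f (sigma T t)) \<alpha> - cpow (f s) \<alpha>)
              - D * (cpow (sigma T t) \<alpha> - cpow s \<alpha>))
        \<le> \<epsilon> * cmod (cpow (sigma T t) \<alpha> - cpow s \<alpha>))"

definition delta_differentiable_alpha ::
    "real set \<Rightarrow> real \<Rightarrow> (real \<Rightarrow> real) \<Rightarrow> real \<Rightarrow> bool" where
  "delta_differentiable_alpha T \<alpha> f t \<longleftrightarrow> (\<exists>D. has_delta_deriv_alpha T \<alpha> f D t)"

end

theory Submission
  imports Defs
begin

text \<open>
  The definition of the delta derivative splits into its instance at \<open>s = t\<close> and an
  eventual statement along \<open>at t within T\<close>. At \<open>s = t\<close> the right-hand side
  \<open>\<epsilon> |\<sigma>(t)\<^sup>\<alpha> - t\<^sup>\<alpha>|\<close> is arbitrarily small, which forces the jump relation (iii).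
  For \<open>0 < \<alpha> < 2\<close> the map \<open>x \<mapsto> x\<^sup>\<alpha>\<close> is injective on the reals, because a negative
  base picks up the phase \<open>exp(i\<pi>\<alpha>) \<noteq> 1\<close>. Hence at a right-scattered point (iii)
  determines the derivative, and the eventual part follows from continuity of \<open>f\<close> and of
  the complex power. At a right-dense point, dividing by \<open>t\<^sup>\<alpha> - s\<^sup>\<alpha> \<noteq> 0\<close> turns the
  eventual part into convergence of the difference quotient.
\<close>

lemma cpow_eq_polar:
  "cpow x a = of_real (\<bar>x\<bar> powr a) * (if x < 0 then exp (\<i> * pi * a) else 1)"
  unfolding cpow_def by (simp add: powr_of_real_if)

lemma norm_cpow: "norm (cpow x a) = \<bar>x\<bar> powr a"
  unfolding cpow_def by (simp add: norm_powr_real_powr')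

lemma exp_i_pi_neq_1:
  fixes a :: real
  assumes "0 < a" "a < 2"
  shows "exp (\<i> * pi * a) \<noteq> 1"
proof
  assume "exp (\<i> * pi * a) = 1"
  then obtain n :: int where "pi * a = of_int (2 * n) * pi"
    by (auto simp: exp_eq_1)
  then have "a = 2 * of_int n" by simp
  with assms show False by simp
qed

lemma powr_abs_inj:
  fixes x y a :: real
  assumes "a \<noteq> 0" "\<bar>x\<bar> powr a = \<bar>y\<bar> powr a"
  shows "\<bar>x\<bar> = \<bar>y\<bar>"
  using arg_cong[OF assms(2), of "\<lambda>r. r powr (1/a)"] assms(1) by (simp add: powr_powr)

lemma cpow_inj:
  assumes "0 < a" "a < 2" and eq: "cpow x a = cpow y a"
  shows "x = y"
proof (rule ccontr)
  assume "x \<noteq> y"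
  have "\<bar>x\<bar> = \<bar>y\<bar>"
    using arg_cong[OF eq, of norm] \<open>0 < a\<close> by (intro powr_abs_inj) (simp_all add: norm_cpow)
  with \<open>x \<noteq> y\<close> have "y = - x" "x \<noteq> 0" by auto
  then have "exp (\<i> * pi * a) = 1"
    using eq by (cases "x < 0") (auto simp: cpow_eq_polar)
  with exp_i_pi_neq_1[OF \<open>0 < a\<close> \<open>a < 2\<close>] show False ..
qed

lemma tendsto_cpow:
  assumes g: "(g \<longlongrightarrow> l) F" and "0 < a"
  shows "((\<lambda>s. cpow (g s) a) \<longlongrightarrow> cpow l a) F"
proof (cases "l = 0")
  case True
  have "((\<lambda>s. \<bar>g s\<bar> powr a) \<longlongrightarrow> 0) F"
    using g True \<open>0 < a\<close> by (intro tendsto_zero_powrI) (auto intro: tendsto_eq_intros)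
  then have "((\<lambda>s. norm (cpow (g s) a)) \<longlongrightarrow> 0) F"
    by (simp add: norm_cpow)
  then have "((\<lambda>s. cpow (g s) a) \<longlongrightarrow> 0) F"
    by (rule tendsto_norm_zero_cancel)
  then show ?thesis
    using True by (simp add: cpow_def)
next
  case False
  have sign: "\<forall>\<^sub>F s in F. g s < 0 \<longleftrightarrow> l < 0"
    using False order_tendstoD[OF g, of 0] by (cases "l < 0") (auto elim: eventually_mono)
  have "((\<lambda>s. of_real (\<bar>g s\<bar> powr a) * (if l < 0 then exp (\<i> * pi * a) else 1))
      \<longlongrightarrow> cpow l a) F"
    unfolding cpow_eq_polar[of l] using g False by (intro tendsto_intros tendsto_powr) auto
  moreover from sign have "\<forall>\<^sub>F s in F.
      of_real (\<bar>g s\<bar> powr a) * (if l < 0 then exp (\<i> * pi * a) else 1) = cpow (g s) a"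
    by eventually_elim (simp add: cpow_eq_polar)
  ultimately show ?thesis
    by (rule Lim_transform_eventually)
qed

lemma tendsto_iff_dist_le:
  "(f \<longlongrightarrow> l) F \<longleftrightarrow> (\<forall>e>0. \<forall>\<^sub>F x in F. dist (f x) l \<le> e)"
  unfolding filterlim_def le_nhds_metric_le eventually_filtermap ..

lemma kappa_subset: "kappa T \<subseteq> T"
  unfolding kappa_def by auto

lemma has_delta_deriv_alpha_iff:
  assumes "t \<in> T"
  shows "has_delta_deriv_alpha T a f D t \<longleftrightarrow>
    cpow (f (sigma T t)) a = cpow (f t) a + (cpow (sigma T t) a - cpow t a) * D \<and>
    (\<forall>e>0. \<forall>\<^sub>F s in at t within T.
       norm (cpow (f (sigma T t)) a - cpow (f s) a - D * (cpow (sigma T t) a - cpow s a))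
         \<le> e * norm (cpow (sigma T t) a - cpow s a))"
proof -
  define E where "E s = cpow (f (sigma T t)) a - cpow (f s) a - D * (cpow (sigma T t) a - cpow s a)" for s
  define M where "M s = norm (cpow (sigma T t) a - cpow s a)" for s
  have "has_delta_deriv_alpha T a f D t \<longleftrightarrow>
      (\<forall>e>0. \<exists>d>0. \<forall>s\<in>T. \<bar>s - t\<bar> < d \<longrightarrow> norm (E s) \<le> e * M s)"
    unfolding has_delta_deriv_alpha_def E_def M_def ..
  also have "\<dots> \<longleftrightarrow> E t = 0 \<and> (\<forall>e>0. \<forall>\<^sub>F s in at t within T. norm (E s) \<le> e * M s)"
  proof safe
    assume approx: "\<forall>e>0. \<exists>d>0. \<forall>s\<in>T. \<bar>s - t\<bar> < d \<longrightarrow> norm (E s) \<le> e * M s"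
    then show "\<forall>\<^sub>F s in at t within T. norm (E s) \<le> e * M s" if "e > 0" for e
      using that by (force simp: eventually_at dist_real_def)
    have at_t: "norm (E t) \<le> e * M t" if "e > 0" for e
      using approx that \<open>t \<in> T\<close> by fastforce
    have "norm (E t) \<le> 0"
    proof (rule field_le_epsilon)
      fix e :: real
      assume "e > 0"
      have "M t \<ge> 0"
        by (simp add: M_def)
      have "norm (E t) \<le> e / (M t + 1) * M t"
        using \<open>e > 0\<close> \<open>M t \<ge> 0\<close> by (intro at_t) simp
      also have "\<dots> \<le> e"
        using \<open>e > 0\<close> \<open>M t \<ge> 0\<close> by (simp add: field_simps)
      finally show "norm (E t) \<le> 0 + e"
        by simp
    qed
    then show "E t = 0"
      by simp
  next
    fix e :: real
    assume "E t = 0" "e > 0" and "\<forall>e>0. \<forall>\<^sub>F s in at t within T. norm (E s) \<le> e * M s"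
    then obtain d where "d > 0" "\<forall>s\<in>T. s \<noteq> t \<and> \<bar>s - t\<bar> < d \<longrightarrow> norm (E s) \<le> e * M s"
      by (force simp: eventually_at dist_real_def)
    with \<open>E t = 0\<close> show "\<exists>d>0. \<forall>s\<in>T. \<bar>s - t\<bar> < d \<longrightarrow> norm (E s) \<le> e * M s"
      by (metis M_def mult_nonneg_nonneg norm_ge_zero norm_zero less_imp_le \<open>e > 0\<close>)
  qed
  also have "E t = 0 \<longleftrightarrow> cpow (f (sigma T t)) a = cpow (f t) a + (cpow (sigma T t) a - cpow t a) * D"
    by (auto simp: E_def algebra_simps)
  finally show ?thesis
    unfolding E_def M_def .
qed

lemma has_delta_deriv_alpha_right_scattered:
  assumes "0 < a" "a < 2" "t \<in> T" and cont: "continuous (at t within T) f"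
    and "sigma T t \<noteq> t"
  shows "has_delta_deriv_alpha T a f
    ((cpow (f (sigma T t)) a - cpow (f t) a) / (cpow (sigma T t) a - cpow t a)) t"
proof -
  define D where "D = (cpow (f (sigma T t)) a - cpow (f t) a) / (cpow (sigma T t) a - cpow t a)"
  define E where "E s = cpow (f (sigma T t)) a - cpow (f s) a - D * (cpow (sigma T t) a - cpow s a)" for s
  define M where "M s = norm (cpow (sigma T t) a - cpow s a)" for s
  have "M t > 0"
    using cpow_inj[OF \<open>0 < a\<close> \<open>a < 2\<close>, of "sigma T t" t] \<open>sigma T t \<noteq> t\<close> by (auto simp: M_def)
  then have jump: "E t = 0"
    by (simp add: E_def D_def M_def)
  have "\<forall>\<^sub>F s in at t within T. norm (E s) \<le> e * M s" if "e > 0" for e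
  proof -
    have "(f \<longlongrightarrow> f t) (at t within T)"
      using cont by (simp add: continuous_within)
    then have "((\<lambda>s. e * M s - norm (E s)) \<longlongrightarrow> e * M t - norm (E t)) (at t within T)"
      unfolding E_def M_def
      by (intro tendsto_intros tendsto_cpow[OF _ \<open>0 < a\<close>] tendsto_ident_at)
    moreover have "e * M t - norm (E t) > 0"
      using jump \<open>M t > 0\<close> \<open>e > 0\<close> by simp
    ultimately have "\<forall>\<^sub>F s in at t within T. e * M s - norm (E s) > 0"
      by (rule order_tendstoD(1))
    then show ?thesis
      by (rule eventually_mono) simp
  qed
  with jump show ?thesis
    unfolding has_delta_deriv_alpha_iff[OF \<open>t \<in> T\<close>] D_def[symmetric]
    by (simp add: E_def M_def algebra_simps)
qed

lemma has_delta_deriv_alpha_iff_tendsto: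
  assumes "0 < a" "a < 2" "t \<in> T" and "sigma T t = t"
  shows "has_delta_deriv_alpha T a f D t \<longleftrightarrow>
    ((\<lambda>s. (cpow (f t) a - cpow (f s) a) / (cpow t a - cpow s a)) \<longlongrightarrow> D) (at t within T)"
proof -
  define Q where "Q s = (cpow (f t) a - cpow (f s) a) / (cpow t a - cpow s a)" for s
  have pointwise: "norm (cpow (f t) a - cpow (f s) a - D * (cpow t a - cpow s a))
      \<le> e * norm (cpow t a - cpow s a) \<longleftrightarrow> dist (Q s) D \<le> e" if "s \<noteq> t" for s e
  proof -
    have nz: "cpow t a - cpow s a \<noteq> 0"
      using cpow_inj[OF \<open>0 < a\<close> \<open>a < 2\<close>, of t s] \<open>s \<noteq> t\<close> by auto
    then have "Q s - D = (cpow (f t) a - cpow (f s) a - D * (cpow t a - cpow s a)) / (cpow t a - cpow s a)"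
      by (simp add: Q_def field_simps)
    with nz show ?thesis
      by (simp add: dist_norm norm_divide divide_le_eq)
  qed
  have "(\<forall>\<^sub>F s in at t within T. norm (cpow (f t) a - cpow (f s) a - D * (cpow t a - cpow s a))
      \<le> e * norm (cpow t a - cpow s a)) \<longleftrightarrow> (\<forall>\<^sub>F s in at t within T. dist (Q s) D \<le> e)" for e
    using eventually_neq_at_within[of t t T] by (intro eventually_subst) (auto elim: eventually_mono simp: pointwise)
  then show ?thesis
    unfolding has_delta_deriv_alpha_iff[OF \<open>t \<in> T\<close>] tendsto_iff_dist_le Q_def[symmetric] \<open>sigma T t = t\<close>
    by simp
qed

theorem theorem1:
  fixes T :: "real set" and f :: "real \<Rightarrow> real" and t \<alpha> :: real
  assumes "time_scale T" and "t \<in> kappa T" and "0 < \<alpha>" and "\<alpha> \<le> 1"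
  shows "(continuous (at t within T) f \<and> right_scattered T t \<longrightarrow>
            delta_differentiable_alpha T \<alpha> f t \<and>
            has_delta_deriv_alpha T \<alpha> f
              ((cpow (f (sigma T t)) \<alpha> - cpow (f t) \<alpha>) / (cpow (sigma T t) \<alpha> - cpow t \<alpha>)) t)
       \<and> (right_dense T t \<longrightarrow>
            (delta_differentiable_alpha T \<alpha> f t \<longleftrightarrow>
               (\<exists>L. ((\<lambda>s. (cpow (f t) \<alpha> - cpow (f s) \<alpha>) / (cpow t \<alpha> - cpow s \<alpha>))
                        \<longlongrightarrow> L) (at t within T)))
            \<and> (\<forall>D. has_delta_deriv_alpha T \<alpha> f D t \<longrightarrow>
                 ((\<lambda>s. (cpow (f t) \<alpha> - cpow (f s) \<alpha>) / (cpow t \<alpha> - cpow s \<alpha>))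
                        \<longlongrightarrow> D) (at t within T)))
       \<and> (\<forall>D. has_delta_deriv_alpha T \<alpha> f D t \<longrightarrow>
            cpow (f (sigma T t)) \<alpha> = cpow (f t) \<alpha> + (cpow (sigma T t) \<alpha> - cpow t \<alpha>) * D)"
proof -
  have "t \<in> T"
    using assms(2) kappa_subset by blast
  have "\<alpha> < 2"
    using assms(4) by simp
  note right_scattered = has_delta_deriv_alpha_right_scattered[OF assms(3) \<open>\<alpha> < 2\<close> \<open>t \<in> T\<close>]
  note right_dense = has_delta_deriv_alpha_iff_tendsto[OF assms(3) \<open>\<alpha> < 2\<close> \<open>t \<in> T\<close>]
  show ?thesis
  proof (intro conjI impI allI)
    assume "continuous (at t within T) f \<and> right_scattered T t"
    then show "has_delta_deriv_alpha T \<alpha> f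
        ((cpow (f (sigma T t)) \<alpha> - cpow (f t) \<alpha>) / (cpow (sigma T t) \<alpha> - cpow t \<alpha>)) t"
      using right_scattered by (simp add: right_scattered_def)
    then show "delta_differentiable_alpha T \<alpha> f t"
      unfolding delta_differentiable_alpha_def ..
  next
    assume "right_dense T t"
    then have "sigma T t = t"
      by (simp add: right_dense_def)
    then show "delta_differentiable_alpha T \<alpha> f t \<longleftrightarrow>
        (\<exists>L. ((\<lambda>s. (cpow (f t) \<alpha> - cpow (f s) \<alpha>) / (cpow t \<alpha> - cpow s \<alpha>)) \<longlongrightarrow> L) (at t within T))"
      and "has_delta_deriv_alpha T \<alpha> f D t \<Longrightarrow>
        ((\<lambda>s. (cpow (f t) \<alpha> - cpow (f s) \<alpha>) / (cpow t \<alpha> - cpow s \<alpha>)) \<longlongrightarrow> D) (at t within T)"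
      for D
      using right_dense by (simp_all add: delta_differentiable_alpha_def)
  next
    fix D
    assume "has_delta_deriv_alpha T \<alpha> f D t"
    then show "cpow (f (sigma T t)) \<alpha> = cpow (f t) \<alpha> + (cpow (sigma T t) \<alpha> - cpow t \<alpha>) * D"
      using has_delta_deriv_alpha_iff[OF \<open>t \<in> T\<close>] by blast
  qed
qed

end
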